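(* Let $m,n,k$ be positive integers. Let $X_1,X_2,\ldots,X_k$ be pairwise disjoint subsets of $[m]$ and let $Y_1,Y_2,\ldots,Y_k$ be subsets of $[n]$. Label all functions $f:[m]\to[n]$ arbitrarily as $f_1,f_2,\ldots,f_{n^m}$, and form the $k\times n^m$ matrix $B=(b_{ij})$ with $b_{ij}=1$ if $f_j(X_i)=Y_i$ and $b_{ij}=0$ otherwise. Then the number $N$ of columns of $B$ all of whose entries are $0$ is $$N=\sum_{I\subseteq [k]}(-1)^{|I|}B(I),\qquad\text{where}\qquad B(I)=n^{|[m]\setminus \bigcup_{i\in I}X_i|}\cdot \prod_{i\in I}|Y_i|!\,S(|X_i|,|Y_i|),$$ and the sum runs over all subsets $I$ of $[k]$.
   Context: $[n]=\{1,\ldots,n\}$; $|X|$ is the cardinality of $X$; $S(a,b)$ denotes the Stirling number of the second kind. *)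

theory Defs
  imports Main "HOL-Library.FuncSet" "HOL-Combinatorics.Stirling"
begin

definition funs :: "nat \<Rightarrow> nat \<Rightarrow> (nat \<Rightarrow> nat) set" where
  "funs m n = {1..m} \<rightarrow>\<^sub>E {1..n}"

end

theory Submission
  imports Defs "HOL-Library.Disjoint_Sets"
begin

text \<open>A column of the matrix vanishes exactly when its function \<open>f\<close> satisfies none of the
  conditions \<open>f ` X i = Y i\<close>, so \<open>N\<close> is an inclusion-exclusion sum over the sets \<open>I\<close> of
  conditions. Since the \<open>X i\<close> are disjoint, a function meeting the conditions in \<open>I\<close> is the
  same as a choice of a surjection \<open>X i \<rightarrow> Y i\<close> for each \<open>i \<in> I\<close>, of which there are
  \<open>|Y i|! S(|X i|, |Y i|)\<close>, together with an arbitrary function on the remaining points.\<close>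

lemma int_card_none_inclusion_exclusion:
  assumes "finite K" "finite F"
  shows "int (card {x\<in>F. \<forall>i\<in>K. \<not> P i x}) =
     (\<Sum>I\<in>Pow K. (-1) ^ card I * int (card {x\<in>F. \<forall>i\<in>I. P i x}))"
proof -
  interpret Incl_Excl finite "int \<circ> card"
    by unfold_locales (auto simp: card_Un_disjnt)
  define A where "A i = {x\<in>F. P i x}" for i
  have finA: "finite (A i)" for i
    using assms(2) by (simp add: A_def)
  have "int (card {x\<in>F. \<forall>i\<in>K. \<not> P i x}) = int (card (F - \<Union>(A ` K)))"
    by (rule arg_cong[where f = "\<lambda>S. int (card S)"]) (auto simp: A_def)
  also have "\<dots> = int (card F) - int (card (\<Union>(A ` K)))"
  proof -
    have "\<Union>(A ` K) \<subseteq> F" by (auto simp: A_def)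
    then show ?thesis
      using assms(2) by (simp add: card_Diff_subset finite_subset card_mono of_nat_diff)
  qed
  also have "int (card (\<Union>(A ` K))) =
      (\<Sum>I | I \<subseteq> K \<and> I \<noteq> {}. (-1) ^ (card I + 1) * int (card (\<Inter>(A ` I))))"
    using restricted_indexed[OF assms(1) finA] by simp
  also have "\<dots> = - (\<Sum>I\<in>Pow K - {{}}. (-1) ^ card I * int (card {x\<in>F. \<forall>i\<in>I. P i x}))"
  proof -
    have "\<Inter>(A ` I) = {x\<in>F. \<forall>i\<in>I. P i x}" if "I \<noteq> {}" for I
      using that by (auto simp: A_def)
    moreover have "{I. I \<subseteq> K \<and> I \<noteq> {}} = Pow K - {{}}" by auto
    ultimately show ?thesis by (simp add: sum_negf)
  qed
  also have "int (card F) - - (\<Sum>I\<in>Pow K - {{}}. (-1) ^ card I * int (card {x\<in>F. \<forall>i\<in>I. P i x})) =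
      (\<Sum>I\<in>Pow K. (-1) ^ card I * int (card {x\<in>F. \<forall>i\<in>I. P i x}))"
    using assms(1) by (simp add: sum.remove[of "Pow K" "{}"])
  finally show ?thesis .
qed

lemma bij_betw_PiE_insert:
  assumes "x \<notin> A"
  shows "bij_betw (\<lambda>f. (f x, f(x := undefined))) (insert x A \<rightarrow>\<^sub>E B) (B \<times> (A \<rightarrow>\<^sub>E B))"
proof (rule bij_betw_byWitness[where f' = "\<lambda>(y, g). g(x := y)"])
  show "\<forall>p\<in>B \<times> (A \<rightarrow>\<^sub>E B). (\<lambda>f. (f x, f(x := undefined))) (case p of (y, g) \<Rightarrow> g(x := y)) = p"
  proof
    fix p assume "p \<in> B \<times> (A \<rightarrow>\<^sub>E B)"
    then obtain y g where p: "p = (y, g)" and g: "g \<in> A \<rightarrow>\<^sub>E B" by blast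
    have "g x = undefined" using g assms by (rule PiE_arb)
    then show "(\<lambda>f. (f x, f(x := undefined))) (case p of (y, g) \<Rightarrow> g(x := y)) = p"
      unfolding p by (simp add: fun_upd_idem)
  qed
  show "(\<lambda>f. (f x, f(x := undefined))) ` (insert x A \<rightarrow>\<^sub>E B) \<subseteq> B \<times> (A \<rightarrow>\<^sub>E B)"
    using assms by (auto intro: fun_upd_in_PiE)
  show "(\<lambda>(y, g). g(x := y)) ` (B \<times> (A \<rightarrow>\<^sub>E B)) \<subseteq> insert x A \<rightarrow>\<^sub>E B"
    by (simp add: PiE_insert_eq)
qed simp

lemma bij_betw_PiE_split:
  assumes "A \<subseteq> D"
  shows "bij_betw (\<lambda>f. (restrict f A, restrict f (D - A)))
           (D \<rightarrow>\<^sub>E B) ((A \<rightarrow>\<^sub>E B) \<times> ((D - A) \<rightarrow>\<^sub>E B))"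
proof (rule bij_betw_byWitness[where f' = "\<lambda>(g, h) z. if z \<in> A then g z else h z"])
  show "\<forall>f\<in>D \<rightarrow>\<^sub>E B. (case (restrict f A, restrict f (D - A)) of
      (g, h) \<Rightarrow> \<lambda>z. if z \<in> A then g z else h z) = f"
  proof
    fix f assume f: "f \<in> D \<rightarrow>\<^sub>E B"
    have "(\<lambda>z. if z \<in> A then restrict f A z else restrict f (D - A) z) = f"
      using PiE_arb[OF f] assms by (auto simp: fun_eq_iff)
    then show "(case (restrict f A, restrict f (D - A)) of
        (g, h) \<Rightarrow> \<lambda>z. if z \<in> A then g z else h z) = f" by simp
  qed
  show "\<forall>p\<in>(A \<rightarrow>\<^sub>E B) \<times> ((D - A) \<rightarrow>\<^sub>E B). (\<lambda>f. (restrict f A, restrict f (D - A)))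
      (case p of (g, h) \<Rightarrow> \<lambda>z. if z \<in> A then g z else h z) = p"
  proof
    fix p assume "p \<in> (A \<rightarrow>\<^sub>E B) \<times> ((D - A) \<rightarrow>\<^sub>E B)"
    then obtain g h where p: "p = (g, h)" and g: "g \<in> A \<rightarrow>\<^sub>E B" and h: "h \<in> D - A \<rightarrow>\<^sub>E B"
      by blast
    have "restrict (\<lambda>z. if z \<in> A then g z else h z) A = g"
      using PiE_arb[OF g] by auto
    moreover have "restrict (\<lambda>z. if z \<in> A then g z else h z) (D - A) = h"
      using PiE_arb[OF h] by auto
    ultimately show "(\<lambda>f. (restrict f A, restrict f (D - A)))
        (case p of (g, h) \<Rightarrow> \<lambda>z. if z \<in> A then g z else h z) = p"
      unfolding p by simp
  qed
  show "(\<lambda>f. (restrict f A, restrict f (D - A))) ` (D \<rightarrow>\<^sub>E B) \<subseteq> (A \<rightarrow>\<^sub>E B) \<times> ((D - A) \<rightarrow>\<^sub>E B)"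
    using assms by auto
  show "(\<lambda>(g, h) z. if z \<in> A then g z else h z) ` ((A \<rightarrow>\<^sub>E B) \<times> ((D - A) \<rightarrow>\<^sub>E B)) \<subseteq> D \<rightarrow>\<^sub>E B"
    using assms by (auto dest: PiE_arb)
qed

definition surjections :: "'a set \<Rightarrow> 'b set \<Rightarrow> ('a \<Rightarrow> 'b) set" where
  "surjections A B = {f \<in> A \<rightarrow>\<^sub>E B. f ` A = B}"

lemma finite_surjections: "finite A \<Longrightarrow> finite B \<Longrightarrow> finite (surjections A B)"
  unfolding surjections_def by (simp add: finite_PiE)

lemma surjections_subset_PiE: "B \<subseteq> C \<Longrightarrow> surjections A B \<subseteq> A \<rightarrow>\<^sub>E C"
  unfolding surjections_def using PiE_mono by blast

lemma insert_image_eq_iff_surjections: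
  assumes "y \<in> B" "g \<in> A \<rightarrow>\<^sub>E B"
  shows "insert y (g ` A) = B \<longleftrightarrow> g \<in> surjections A B \<union> surjections A (B - {y})"
proof -
  have "g ` A \<subseteq> B" using assms(2) by auto
  then have "insert y (g ` A) = B \<longleftrightarrow> g ` A = B \<or> g ` A = B - {y}"
    using assms(1) by blast
  moreover have "g \<in> surjections A B \<longleftrightarrow> g ` A = B"
    using assms(2) by (simp add: surjections_def)
  moreover have "g \<in> surjections A (B - {y}) \<longleftrightarrow> g ` A = B - {y}"
  proof
    assume im: "g ` A = B - {y}"
    have "g \<in> A \<rightarrow>\<^sub>E B - {y}"
    proof (rule PiE_I)
      show "g a \<in> B - {y}" if "a \<in> A" for a using im that by blast
      show "g a = undefined" if "a \<notin> A" for a using assms(2) that by (rule PiE_arb)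
    qed
    with im show "g \<in> surjections A (B - {y})" by (simp add: surjections_def)
  next
    assume "g \<in> surjections A (B - {y})"
    then show "g ` A = B - {y}" by (simp add: surjections_def)
  qed
  ultimately show ?thesis by (simp only: Un_iff)
qed

text \<open>Removing a point from the domain of a surjection onto \<open>B\<close> leaves a surjection onto
  \<open>B\<close> or onto \<open>B - {y}\<close>, where \<open>y\<close> is the image of the point; this gives the recurrence
  of the Stirling numbers.\<close>

lemma bij_betw_surjections_insert:
  assumes "x \<notin> A"
  shows "bij_betw (\<lambda>f. (f x, f(x := undefined))) (surjections (insert x A) B)
           (SIGMA y:B. surjections A B \<union> surjections A (B - {y}))"
proof -
  have "bij_betw (\<lambda>f. (f x, f(x := undefined))) (surjections (insert x A) B)
          {p \<in> B \<times> (A \<rightarrow>\<^sub>E B). insert (fst p) (snd p ` A) = B}"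
    unfolding surjections_def
  proof (rule bij_betw_Collect[OF bij_betw_PiE_insert[OF assms]])
    fix f :: "'a \<Rightarrow> 'b"
    have "f(x := undefined) ` A = f ` A"
      using assms by (intro image_cong) auto
    then show "insert (fst (f x, f(x := undefined))) (snd (f x, f(x := undefined)) ` A) = B \<longleftrightarrow>
        f ` insert x A = B"
      by (simp only: fst_conv snd_conv image_insert)
  qed
  also have "{p \<in> B \<times> (A \<rightarrow>\<^sub>E B). insert (fst p) (snd p ` A) = B} =
      (SIGMA y:B. surjections A B \<union> surjections A (B - {y}))"
  proof (rule set_eqI)
    fix p :: "'b \<times> ('a \<Rightarrow> 'b)"
    obtain y g where p: "p = (y, g)" by fastforce
    have "g \<in> A \<rightarrow>\<^sub>E B" if "g \<in> surjections A B \<union> surjections A (B - {y})"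
      using that surjections_subset_PiE[of B B A] surjections_subset_PiE[of "B - {y}" B A] by blast
    then show "p \<in> {p \<in> B \<times> (A \<rightarrow>\<^sub>E B). insert (fst p) (snd p ` A) = B} \<longleftrightarrow>
        p \<in> (SIGMA y:B. surjections A B \<union> surjections A (B - {y}))"
      unfolding p using insert_image_eq_iff_surjections[of y B g A] by auto
  qed
  finally show ?thesis .
qed

lemma card_surjections:
  assumes "finite A" "finite B"
  shows "card (surjections A B) = fact (card B) * Stirling (card A) (card B)"
  using assms
proof (induction A arbitrary: B rule: finite_induct)
  case empty
  show ?case
  proof (cases "B = {}")
    case False
    then have none: "surjections {} B = {}" by (auto simp: surjections_def)
    obtain k where k: "card B = Suc k"
      using False empty by (metis card_0_eq not0_implies_Suc)
    show ?thesis unfolding none k by simp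
  qed (simp add: surjections_def)
next
  case (insert x A)
  have disj: "surjections A B \<inter> surjections A (B - {y}) = {}" if "y \<in> B" for y
    using that by (auto simp: surjections_def)
  have "card (surjections (insert x A) B) =
      card (SIGMA y:B. surjections A B \<union> surjections A (B - {y}))"
    by (rule bij_betw_same_card[OF bij_betw_surjections_insert[OF insert.hyps(2)]])
  also have "\<dots> = (\<Sum>y\<in>B. card (surjections A B \<union> surjections A (B - {y})))"
    using insert.prems insert.hyps(1) by (intro card_SigmaI) (auto intro: finite_surjections)
  also have "\<dots> = (\<Sum>y\<in>B. card (surjections A B) + card (surjections A (B - {y})))"
    using insert.prems insert.hyps(1) disj
    by (intro sum.cong refl card_Un_disjoint) (auto intro: finite_surjections)
  also have "\<dots> = card B * (fact (card B) * Stirling (card A) (card B)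
                   + fact (card B - 1) * Stirling (card A) (card B - 1))"
    using insert.IH insert.prems by simp
  also have "\<dots> = fact (card B) * Stirling (card (insert x A)) (card B)"
    using insert.hyps by (cases "card B") (simp_all add: algebra_simps)
  finally show ?case .
qed

lemma bij_betw_PiE_images_split:
  assumes "A \<subseteq> D" "B \<subseteq> N" "\<And>i. i \<in> I \<Longrightarrow> X i \<subseteq> D - A"
  shows "bij_betw (\<lambda>f. (restrict f A, restrict f (D - A)))
           {f \<in> D \<rightarrow>\<^sub>E N. f ` A = B \<and> (\<forall>i\<in>I. f ` X i = Y i)}
           (surjections A B \<times> {g \<in> D - A \<rightarrow>\<^sub>E N. \<forall>i\<in>I. g ` X i = Y i})"
proof -
  have "bij_betw (\<lambda>f. (restrict f A, restrict f (D - A)))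
      {f \<in> D \<rightarrow>\<^sub>E N. f ` A = B \<and> (\<forall>i\<in>I. f ` X i = Y i)}
      {p \<in> (A \<rightarrow>\<^sub>E N) \<times> (D - A \<rightarrow>\<^sub>E N). fst p ` A = B \<and> (\<forall>i\<in>I. snd p ` X i = Y i)}"
  proof (rule bij_betw_Collect[OF bij_betw_PiE_split[OF assms(1)]])
    fix f :: "'a \<Rightarrow> 'b"
    have "restrict f (D - A) ` X i = f ` X i" if "i \<in> I" for i
      using assms(3)[OF that] by (intro image_cong) auto
    then show "fst (restrict f A, restrict f (D - A)) ` A = B \<and>
        (\<forall>i\<in>I. snd (restrict f A, restrict f (D - A)) ` X i = Y i) \<longleftrightarrow>
        f ` A = B \<and> (\<forall>i\<in>I. f ` X i = Y i)"
      by simp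
  qed
  also have "{p \<in> (A \<rightarrow>\<^sub>E N) \<times> (D - A \<rightarrow>\<^sub>E N). fst p ` A = B \<and> (\<forall>i\<in>I. snd p ` X i = Y i)} =
      surjections A B \<times> {g \<in> D - A \<rightarrow>\<^sub>E N. \<forall>i\<in>I. g ` X i = Y i}"
  proof (rule set_eqI)
    fix p :: "('a \<Rightarrow> 'b) \<times> ('a \<Rightarrow> 'b)"
    obtain g h where p: "p = (g, h)" by fastforce
    have "g \<in> A \<rightarrow>\<^sub>E N \<and> g ` A = B \<longleftrightarrow> g \<in> surjections A B"
      using surjections_subset_PiE[OF assms(2), of A] unfolding surjections_def by blast
    then show "p \<in> {p \<in> (A \<rightarrow>\<^sub>E N) \<times> (D - A \<rightarrow>\<^sub>E N). fst p ` A = B \<and> (\<forall>i\<in>I. snd p ` X i = Y i)} \<longleftrightarrow>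
        p \<in> surjections A B \<times> {g \<in> D - A \<rightarrow>\<^sub>E N. \<forall>i\<in>I. g ` X i = Y i}"
      unfolding p by auto
  qed
  finally show ?thesis .
qed

lemma card_PiE_with_images:
  assumes "finite I" "finite D" "finite N" "disjoint_family_on X I"
    and "\<And>i. i \<in> I \<Longrightarrow> X i \<subseteq> D" "\<And>i. i \<in> I \<Longrightarrow> Y i \<subseteq> N"
  shows "card {f \<in> D \<rightarrow>\<^sub>E N. \<forall>i\<in>I. f ` X i = Y i} =
    card N ^ card (D - (\<Union>i\<in>I. X i)) *
      (\<Prod>i\<in>I. fact (card (Y i)) * Stirling (card (X i)) (card (Y i)))"
  using assms
proof (induction I arbitrary: D rule: finite_induct)
  case empty
  then show ?case by (simp add: card_PiE)
next
  case (insert a I)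
  have Xa: "X a \<subseteq> D" and Ya: "Y a \<subseteq> N"
    using insert.prems by auto
  have XI: "X i \<subseteq> D - X a" if "i \<in> I" for i
  proof -
    have "i \<noteq> a" using that insert.hyps(2) by blast
    then have "X i \<inter> X a = {}"
      using that by (intro disjoint_family_onD[OF insert.prems(3)]) auto
    moreover have "X i \<subseteq> D" using that insert.prems(4) by blast
    ultimately show ?thesis by blast
  qed
  have "card {f \<in> D \<rightarrow>\<^sub>E N. \<forall>i\<in>insert a I. f ` X i = Y i} =
      card (surjections (X a) (Y a) \<times> {g \<in> D - X a \<rightarrow>\<^sub>E N. \<forall>i\<in>I. g ` X i = Y i})"
    using bij_betw_same_card[OF bij_betw_PiE_images_split[OF Xa Ya XI]] by simp
  also have "\<dots> = card (surjections (X a) (Y a)) * card {g \<in> D - X a \<rightarrow>\<^sub>E N. \<forall>i\<in>I. g ` X i = Y i}"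
    by (rule card_cartesian_product)
  also have "card (surjections (X a) (Y a)) = fact (card (Y a)) * Stirling (card (X a)) (card (Y a))"
    using Xa Ya insert.prems(1,2) by (intro card_surjections) (auto intro: finite_subset)
  also have "card {g \<in> D - X a \<rightarrow>\<^sub>E N. \<forall>i\<in>I. g ` X i = Y i} =
      card N ^ card (D - X a - (\<Union>i\<in>I. X i)) *
        (\<Prod>i\<in>I. fact (card (Y i)) * Stirling (card (X i)) (card (Y i)))"
    using insert.prems XI disjoint_family_on_mono[OF subset_insertI insert.prems(3)]
    by (intro insert.IH) auto
  also have "D - X a - (\<Union>i\<in>I. X i) = D - (\<Union>i\<in>insert a I. X i)"
    by auto
  finally show ?case
    using insert.hyps by (simp add: ac_simps)
qed

theorem theorem2:
  fixes m n k :: nat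
    and X Y :: "nat \<Rightarrow> nat set"
    and lab :: "nat \<Rightarrow> (nat \<Rightarrow> nat)"
    and b :: "nat \<Rightarrow> nat \<Rightarrow> nat"
  assumes "m > 0" "n > 0" "k > 0"
    and X_sub: "\<forall>i\<in>{1..k}. X i \<subseteq> {1..m}"
    and X_disj: "\<forall>i\<in>{1..k}. \<forall>j\<in>{1..k}. i \<noteq> j \<longrightarrow> X i \<inter> X j = {}"
    and Y_sub: "\<forall>i\<in>{1..k}. Y i \<subseteq> {1..n}"
    and lab: "bij_betw lab {1..n ^ m} (funs m n)"
    and b_def: "\<forall>i\<in>{1..k}. \<forall>j\<in>{1..n ^ m}.
                  b i j = (if lab j ` X i = Y i then 1 else 0)"
  shows "int (card {j \<in> {1..n ^ m}. \<forall>i\<in>{1..k}. b i j = 0}) =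
    (\<Sum>I\<in>Pow {1..k}. (-1) ^ card I *
       int (n ^ card ({1..m} - (\<Union>i\<in>I. X i)) *
            (\<Prod>i\<in>I. fact (card (Y i)) * Stirling (card (X i)) (card (Y i)))))"
proof -
  have "bij_betw lab {j \<in> {1..n ^ m}. \<forall>i\<in>{1..k}. b i j = 0}
      {f \<in> funs m n. \<forall>i\<in>{1..k}. \<not> f ` X i = Y i}"
    using b_def by (intro bij_betw_Collect[OF lab]) auto
  then have "int (card {j \<in> {1..n ^ m}. \<forall>i\<in>{1..k}. b i j = 0}) =
      int (card {f \<in> funs m n. \<forall>i\<in>{1..k}. \<not> f ` X i = Y i})"
    by (simp add: bij_betw_same_card)
  also have "\<dots> = (\<Sum>I\<in>Pow {1..k}. (-1) ^ card I * int (card {f \<in> funs m n. \<forall>i\<in>I. f ` X i = Y i}))"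
    by (rule int_card_none_inclusion_exclusion) (simp_all add: funs_def finite_PiE)
  also have "\<dots> = (\<Sum>I\<in>Pow {1..k}. (-1) ^ card I *
       int (n ^ card ({1..m} - (\<Union>i\<in>I. X i)) *
            (\<Prod>i\<in>I. fact (card (Y i)) * Stirling (card (X i)) (card (Y i)))))"
  proof (rule sum.cong[OF refl])
    fix I assume "I \<in> Pow {1..k}"
    then have "I \<subseteq> {1..k}" "finite I" by (auto intro: finite_subset)
    moreover have "disjoint_family_on X I"
      using \<open>I \<subseteq> {1..k}\<close> X_disj by (auto simp: disjoint_family_on_def)
    ultimately show "(-1) ^ card I * int (card {f \<in> funs m n. \<forall>i\<in>I. f ` X i = Y i}) =
        (-1) ^ card I * int (n ^ card ({1..m} - (\<Union>i\<in>I. X i)) *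
          (\<Prod>i\<in>I. fact (card (Y i)) * Stirling (card (X i)) (card (Y i))))"
      using X_sub Y_sub unfolding funs_def by (subst card_PiE_with_images) auto
  qed
  finally show ?thesis .
qed

end
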